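(* For every $\lambda\in\mathbb C$, every $g\in SL_2(\Gamma_n)$ and every function $f:E^n\to\Sigma$, \[E_1\,\big(\pi'_\lambda(g)f\big)=\pi_\lambda(g)\big(E_1 f\big),\] where $E_1f$ denotes the function $x\mapsto E_1f(x)$.
   Context: Let $n\ge 2$, let $E^n=\mathbb R^n$ with orthonormal basis $e_1,\dots,e_n$ and $E^{n-1}=\mathrm{span}(e_2,\dots,e_n)$. Let $Cl_{n-1}$ be the real Clifford algebra generated by $E^{n-1}$ with relations $uv+vu=-2(u,v)$; identify $E^n$ with $\mathbb R\oplus E^{n-1}\subset Cl_{n-1}$, $e_1\leftrightarrow1$. Let $a\mapsto a'$ be the principal automorphism ($e_j\mapsto-e_j$, $j\ge 2$), $a\mapsto a^*$ the reversion (anti-automorphism fixing each $e_j$), and $|\cdot|$ the canonical norm of $Cl_{n-1}$. The Clifford group $\Gamma_n$ is the set of finite products of nonzero vectors. A Clifford matrix is $\begin{pmatrix} a&b\\ c&d\end{pmatrix}$ with $a,b,c,d\in\Gamma_n\cup\{0\}$, $ad^*-bc^*=1$, $ab^*\in E^n$, $cd^*\in E^n$; they form a group $SL_2(\Gamma_n)$, and $d^*-b^*x\in\Gamma_n\cup\{0\}$ for $x\in E^n$. Let $\Sigma$ be a finite-dimensional complex Hilbert space with skew-Hermitian operators $E_1,\dots,E_n$ satisfying $E_iE_j+E_jE_i=-2\delta_{ij}\mathrm{Id}$; let $\tau:Cl_{n-1}\to\mathrm{End}(\Sigma)$ be the unital algebra homomorphism with $\tau(e_j)=E_1E_j$ ($2\le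 j\le n$), and $\tau'(a)=\tau(a')$. For $\lambda\in\mathbb C$ and $g=\begin{pmatrix} a&b\\ c&d\end{pmatrix}\in SL_2(\Gamma_n)$ define, for $x$ with $d^*-b^*x\ne0$, $\pi_\lambda(g)f(x)=|d^*-b^*x|^{-2\lambda-n}\,\tau\big(\tfrac{d^*-b^*x}{|d^*-b^*x|}\big)^{-1}f\big((-c^*+a^*x)(d^*-b^*x)^{-1}\big)$, and $\pi'_\lambda(g)$ by the same formula with $\tau$ replaced by $\tau'$. *)

theory Defs
  imports "HOL-Analysis.Analysis"
begin

text \<open>A multivector is represented by its coefficients with respect to the basis
 e_A = e_{a1} ... e_{ak} (a1 < ... < ak), A a subset of {2..n}.  Only multivectors
 whose coefficients vanish outside Pow {2..n} are genuine elements of Cl_{n-1}.\<close>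

type_synonym mv = "nat set \<Rightarrow> real"

definition CL :: "nat \<Rightarrow> mv set" where
  "CL n = {a. \<forall>A. \<not> A \<subseteq> {2..n} \<longrightarrow> a A = 0}"

text \<open>Sign of e_A e_B = sign * e_(A symmetric difference B), using e_j^2 = -1.\<close>
definition blade_sign :: "nat set \<Rightarrow> nat set \<Rightarrow> real" where
  "blade_sign A B = (-1) ^ card {(i, j). i \<in> A \<and> j \<in> B \<and> j < i} * (-1) ^ card (A \<inter> B)"

definition cl_mult :: "nat \<Rightarrow> mv \<Rightarrow> mv \<Rightarrow> mv" where
  "cl_mult n a b = (\<lambda>C. \<Sum>A\<in>Pow {2..n}. \<Sum>B\<in>Pow {2..n}.
      if (A - B) \<union> (B - A) = C then blade_sign A B * a A * b B else 0)"

definition cl_scalar :: "real \<Rightarrow> mv" where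
  "cl_scalar r = (\<lambda>A. if A = {} then r else 0)"

definition cl_one :: mv where "cl_one = cl_scalar 1"

definition cl_add :: "mv \<Rightarrow> mv \<Rightarrow> mv" where "cl_add a b = (\<lambda>A. a A + b A)"
definition cl_sub :: "mv \<Rightarrow> mv \<Rightarrow> mv" where "cl_sub a b = (\<lambda>A. a A - b A)"
definition cl_neg :: "mv \<Rightarrow> mv" where "cl_neg a = (\<lambda>A. - a A)"
definition cl_scale :: "real \<Rightarrow> mv \<Rightarrow> mv" where "cl_scale r a = (\<lambda>A. r * a A)"

text \<open>Principal automorphism a \<mapsto> a' (e_j \<mapsto> -e_j).\<close>
definition cl_prin :: "mv \<Rightarrow> mv" where
  "cl_prin a = (\<lambda>A. (-1) ^ card A * a A)"

text \<open>Reversion a \<mapsto> a^* (anti-automorphism fixing each e_j).\<close>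
definition cl_rev :: "mv \<Rightarrow> mv" where
  "cl_rev a = (\<lambda>A. (-1) ^ (card A * (card A - 1) div 2) * a A)"

definition cl_norm :: "nat \<Rightarrow> mv \<Rightarrow> real" where
  "cl_norm n a = sqrt (\<Sum>A\<in>Pow {2..n}. (a A)^2)"

definition cl_inv :: "nat \<Rightarrow> mv \<Rightarrow> mv" where
  "cl_inv n a = (THE b. b \<in> CL n \<and> cl_mult n a b = cl_one \<and> cl_mult n b a = cl_one)"

text \<open>E^n = R \<oplus> E^{n-1}, with e_1 identified with 1.\<close>
definition vecs :: "nat \<Rightarrow> mv set" where
  "vecs n = {x. \<forall>A. x A \<noteq> 0 \<longrightarrow> A = {} \<or> (\<exists>j\<in>{2..n}. A = {j})}"

definition clifford_group :: "nat \<Rightarrow> mv set" where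
  "clifford_group n = {foldr (cl_mult n) vs cl_one | vs.
      vs \<noteq> [] \<and> (\<forall>v\<in>set vs. v \<in> vecs n \<and> v \<noteq> (\<lambda>_. 0))}"

text \<open>Clifford matrices (a, b, c, d) = [[a, b], [c, d]].\<close>
definition SL2_Gamma :: "nat \<Rightarrow> (mv \<times> mv \<times> mv \<times> mv) set" where
  "SL2_Gamma n = {(a, b, c, d).
      {a, b, c, d} \<subseteq> clifford_group n \<union> {\<lambda>_. 0} \<and>
      cl_sub (cl_mult n a (cl_rev d)) (cl_mult n b (cl_rev c)) = cl_one \<and>
      cl_mult n a (cl_rev b) \<in> vecs n \<and>
      cl_mult n c (cl_rev d) \<in> vecs n}"

definition cadj :: "complex^'m^'m \<Rightarrow> complex^'m^'m" where
  "cadj M = (\<chi> i j. cnj (M $ j $ i))"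

text \<open>The unital algebra homomorphism tau with tau(e_j) = E_1 E_j, written out on the basis
 e_A = e_{a1}...e_{ak} (a1 < ... < ak).\<close>
definition tau :: "nat \<Rightarrow> (nat \<Rightarrow> complex^'m^'m) \<Rightarrow> mv \<Rightarrow> complex^'m^'m" where
  "tau n E a = (\<Sum>A\<in>Pow {2..n}. mat (complex_of_real (a A)) **
      foldr (\<lambda>j M. (E 1 ** E j) ** M) (sorted_list_of_set A) (mat 1))"

definition tau' :: "nat \<Rightarrow> (nat \<Rightarrow> complex^'m^'m) \<Rightarrow> mv \<Rightarrow> complex^'m^'m" where
  "tau' n E a = tau n E (cl_prin a)"

text \<open>Generic formula, parametrised by the map t (tau or tau').  Where d^* - b^* x = 0 the
 formula is undefined; we put the value 0 there.\<close>
definition pi_gen :: "nat \<Rightarrow> (mv \<Rightarrow> complex^'m^'m) \<Rightarrow> complex \<Rightarrow> mv \<times> mv \<times> mv \<times> mv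
     \<Rightarrow> (mv \<Rightarrow> complex^'m) \<Rightarrow> mv \<Rightarrow> complex^'m" where
  "pi_gen n t lam g f x = (case g of (a, b, c, d) \<Rightarrow>
     let w = cl_sub (cl_rev d) (cl_mult n (cl_rev b) x) in
     if w = (\<lambda>_. 0) then 0 else
       (complex_of_real (cl_norm n w) powr (- 2 * lam - of_nat n)) *s
       (matrix_inv (t (cl_scale (1 / cl_norm n w) w)) *v
         f (cl_mult n (cl_add (cl_neg (cl_rev c)) (cl_mult n (cl_rev a) x)) (cl_inv n w))))"

definition pi_rep :: "nat \<Rightarrow> (nat \<Rightarrow> complex^'m^'m) \<Rightarrow> complex \<Rightarrow> mv \<times> mv \<times> mv \<times> mv
     \<Rightarrow> (mv \<Rightarrow> complex^'m) \<Rightarrow> mv \<Rightarrow> complex^'m" where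
  "pi_rep n E = pi_gen n (tau n E)"

definition pi'_rep :: "nat \<Rightarrow> (nat \<Rightarrow> complex^'m^'m) \<Rightarrow> complex \<Rightarrow> mv \<times> mv \<times> mv \<times> mv
     \<Rightarrow> (mv \<Rightarrow> complex^'m) \<Rightarrow> mv \<Rightarrow> complex^'m" where
  "pi'_rep n E = pi_gen n (tau' n E)"

end

theory Submission
  imports Defs
begin

(* Put eps = E_1 and X_j = E_1 E_j, so that tau(e_j) = X_j.  Conjugation by eps
   fixes eps and negates every X_j, hence  tau'(a) = tau(a') = eps tau(a) eps^-1  for every
   multivector a.  Consequently  E_1 tau'(a)^-1 = tau(a)^-1 E_1  as soon as tau(a) is invertible,
   and both sides of the theorem are then equal pointwise.  The real work is to show that
   tau(u) is invertible for u = w/|w|, w = d^* - b^* x the (nonzero) denominator of the formula.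

   A sign calculus for the blade products
   e_A e_B gives, in a locale for Clifford generators e_1..e_n, that tau is multiplicative and
   injective (the latter by a trace argument), that tau intertwines the principal automorphism
   with eps-conjugation and reversion with a matrix anti-automorphism mrev.  Paravectors
   (images of E^n) are invertible when nonzero and are preserved by sandwiching; this yields
   the Vahlen-type factorisation  tau(rev d) = mrev(tau b) p  with p a paravector (rev the
   reversion), whence tau(w) is invertible. *)

section \<open>Complex square matrices as a real algebra\<close>

typedef ('m::finite) cmat = "UNIV :: (complex^'m^'m) set"
  morphisms to_matrix of_matrix by auto

setup_lifting type_definition_cmat

instantiation cmat :: (finite) ring_1
begin
lift_definition zero_cmat :: "'a cmat" is "0" .
lift_definition one_cmat :: "'a cmat" is "mat 1" .
lift_definition plus_cmat :: "'a cmat \<Rightarrow> 'a cmat \<Rightarrow> 'a cmat" is "(+)" .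
lift_definition minus_cmat :: "'a cmat \<Rightarrow> 'a cmat \<Rightarrow> 'a cmat" is "(-)" .
lift_definition uminus_cmat :: "'a cmat \<Rightarrow> 'a cmat" is "uminus" .
lift_definition times_cmat :: "'a cmat \<Rightarrow> 'a cmat \<Rightarrow> 'a cmat" is "(**)" .
instance
proof
  fix a b c :: "'a cmat"
  show "a * b * c = a * (b * c)" by transfer (simp add: matrix_mul_assoc)
  show "1 * a = a" by transfer simp
  show "a * 1 = a" by transfer simp
  show "(a + b) * c = a * c + b * c"
    by transfer (simp add: matrix_matrix_mult_def vec_eq_iff sum.distrib distrib_right)
  show "a * (b + c) = a * b + a * c" by transfer (simp add: matrix_add_ldistrib)
  show "a + b + c = a + (b + c)" by transfer (simp add: add.assoc)
  show "a + b = b + a" by transfer (simp add: add.commute)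
  show "0 + a = a" by transfer simp
  show "- a + a = 0" by transfer simp
  show "a - b = a + - b" by transfer simp
  have "to_matrix (0::'a cmat) $ undefined $ undefined \<noteq> to_matrix (1::'a cmat) $ undefined $ undefined"
    by (simp add: zero_cmat.rep_eq one_cmat.rep_eq mat_def)
  then show "(0::'a cmat) \<noteq> 1" by auto
qed
end

instantiation cmat :: (finite) real_algebra_1
begin
lift_definition scaleR_cmat :: "real \<Rightarrow> 'a cmat \<Rightarrow> 'a cmat" is "scaleR" .
instance
proof
  fix a b :: real and x y :: "'a cmat"
  show "a *\<^sub>R (x + y) = a *\<^sub>R x + a *\<^sub>R y" by transfer (simp add: scaleR_add_right)
  show "(a + b) *\<^sub>R x = a *\<^sub>R x + b *\<^sub>R x" by transfer (simp add: scaleR_add_left)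
  show "a *\<^sub>R b *\<^sub>R x = (a * b) *\<^sub>R x" by transfer simp
  show "1 *\<^sub>R x = x" by transfer simp
  show "a *\<^sub>R x * y = a *\<^sub>R (x * y)" by transfer (simp add: scalar_matrix_assoc)
  show "x * a *\<^sub>R y = a *\<^sub>R (x * y)" by transfer (simp add: matrix_scalar_ac scalar_matrix_assoc)
qed
end

lemma to_matrix_mult: "to_matrix (x * y) = to_matrix x ** to_matrix y" by transfer simp
lemma to_matrix_add: "to_matrix (x + y) = to_matrix x + to_matrix y" by transfer simp
lemma to_matrix_minus: "to_matrix (- x) = - to_matrix x" by transfer simp
lemma to_matrix_one: "to_matrix 1 = mat 1" by transfer simp
lemma to_matrix_zero: "to_matrix 0 = 0" by transfer simp
lemma to_matrix_scaleR: "to_matrix (r *\<^sub>R x) = r *\<^sub>R to_matrix x" by transfer simp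

lemma to_matrix_sum: "finite S \<Longrightarrow> to_matrix (sum f S) = (\<Sum>i\<in>S. to_matrix (f i))"
  by (induction S rule: finite_induct) (simp_all add: to_matrix_add to_matrix_zero)

lemma mat_of_real_mult: "mat (complex_of_real r) ** (A::complex^'n^'n) = r *\<^sub>R A"
  by (simp add: vec_eq_iff matrix_matrix_mult_def mat_def if_distrib if_distribR sum.delta'
      cong: if_cong; simp add: scaleR_conv_of_real)

lemma to_matrix_of_real: "to_matrix (of_real r :: 'a::finite cmat) = mat (complex_of_real r)"
  unfolding of_real_def to_matrix_scaleR to_matrix_one
  by (simp add: vec_eq_iff mat_def; simp add: scaleR_conv_of_real)

lemma matrix_inv_eq: assumes "(A::complex^'n^'n) ** B = mat 1" "B ** A = mat 1"
  shows "matrix_inv A = B"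
proof -
  have ex: "\<exists>A'. A ** A' = mat 1 \<and> A' ** A = mat 1" using assms by blast
  let ?C = "matrix_inv A"
  have C: "A ** ?C = mat 1 \<and> ?C ** A = mat 1" unfolding matrix_inv_def by (rule someI_ex[OF ex])
  have "?C = ?C ** (A ** B)" using assms by simp
  also have "\<dots> = (?C ** A) ** B" by (simp add: matrix_mul_assoc)
  also have "\<dots> = B" using C by simp
  finally show ?thesis .
qed

lemma matrix_inv_to_matrix: assumes "Y * Z = 1" "Z * Y = 1"
  shows "matrix_inv (to_matrix Y) = to_matrix Z"
  using assms by (intro matrix_inv_eq) (simp_all add: to_matrix_mult[symmetric] to_matrix_one[symmetric])

lift_definition adjoint :: "'a::finite cmat \<Rightarrow> 'a cmat" is cadj .

lemma cnj_sum: "cnj (sum f S) = (\<Sum>i\<in>S. cnj (f i))"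
  by (induction S rule: infinite_finite_induct) auto

lemma adjoint_mult: "adjoint (x * y) = adjoint y * adjoint x"
  by transfer (simp add: cadj_def matrix_matrix_mult_def vec_eq_iff cnj_sum mult.commute)
lemma adjoint_add: "adjoint (x + y) = adjoint x + adjoint y"
  by transfer (simp add: cadj_def vec_eq_iff)
lemma adjoint_minus: "adjoint (- x) = - adjoint x"
  by transfer (simp add: cadj_def vec_eq_iff)
lemma adjoint_diff: "adjoint (x - y) = adjoint x - adjoint y"
  by transfer (simp add: cadj_def vec_eq_iff)
lemma adjoint_one: "adjoint 1 = 1"
  by transfer (simp add: cadj_def vec_eq_iff mat_def)
lemma adjoint_zero: "adjoint 0 = 0"
  by transfer (simp add: cadj_def vec_eq_iff)
lemma adjoint_scaleR: "adjoint (r *\<^sub>R x) = r *\<^sub>R adjoint x"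
  by transfer (simp add: cadj_def vec_eq_iff)
lemma adjoint_adjoint: "adjoint (adjoint x) = x"
  by transfer (simp add: cadj_def vec_eq_iff)

text \<open>The trace, used to show that distinct blades are linearly independent.\<close>

lift_definition mtrace :: "'a::finite cmat \<Rightarrow> complex" is trace .

lemma mtrace_mult: "mtrace (x * y) = mtrace (y * x)"
  by transfer (rule trace_mul_sym)
lemma mtrace_minus: "mtrace (- x) = - mtrace x"
  by transfer (simp add: trace_def sum_negf)
lemma mtrace_scaleR: "mtrace (r *\<^sub>R x) = of_real r * mtrace x"
  by transfer (simp add: trace_def scaleR_sum_right[symmetric], simp add: scaleR_conv_of_real)
lemma mtrace_one: "mtrace (1::'a::finite cmat) = of_nat CARD('a)"
  by transfer (rule trace_I)
lemma mtrace_zero: "mtrace 0 = 0"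
  by transfer (simp add: trace_def)
lemma mtrace_add: "mtrace (x + y) = mtrace x + mtrace y"
  by transfer (rule trace_add)
lemma mtrace_sum: "finite S \<Longrightarrow> mtrace (sum f S) = (\<Sum>i\<in>S. mtrace (f i))"
  by (induction S rule: finite_induct) (simp_all add: mtrace_zero mtrace_add)

lemma mtrace_anticommuting: assumes UU: "U * U = -1" and UY: "U * Y = - (Y * U)"
  shows "mtrace Y = 0"
proof -
  have 1: "Y * U * U = - Y" using UU by (simp add: mult.assoc)
  have "mtrace (Y * U * U) = mtrace (U * (Y * U))" by (rule mtrace_mult)
  also have "U * (Y * U) = - (Y * U * U)" using UY by (simp add: mult.assoc[symmetric])
  finally have "mtrace (Y * U * U) = 0" by (simp add: mtrace_minus)
  then show ?thesis unfolding 1 by (simp add: mtrace_minus)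
qed

lemma half_of_double: fixes y :: "'a::real_vector"
  shows "y + y = (2 * t) *\<^sub>R z \<Longrightarrow> y = t *\<^sub>R z"
proof -
  assume a: "y + y = (2 * t) *\<^sub>R z"
  have 1: "(2::real) *\<^sub>R y = (2 * t) *\<^sub>R z" using a by (simp add: scaleR_2)
  have "y = (1/2::real) *\<^sub>R ((2::real) *\<^sub>R y)" by simp
  then show ?thesis unfolding 1 by simp
qed

definition has_inverse :: "'a::ring_1 \<Rightarrow> bool" where
  "has_inverse y \<longleftrightarrow> (\<exists>z. y * z = 1 \<and> z * y = 1)"

lemma has_inverse_mult: assumes "has_inverse y" "has_inverse z" shows "has_inverse (y * z)"
proof -
  obtain y' z' where y': "y * y' = 1" "y' * y = 1" and z': "z * z' = 1" "z' * z = 1"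
    using assms unfolding has_inverse_def by blast
  have "(y * z) * (z' * y') = y * (z * z') * y'" by (simp add: mult.assoc)
  also have "\<dots> = 1" using y' z' by simp
  finally have right: "(y * z) * (z' * y') = 1" .
  have "(z' * y') * (y * z) = z' * (y' * y) * z" by (simp add: mult.assoc)
  also have "\<dots> = 1" using y' z' by simp
  finally have left: "(z' * y') * (y * z) = 1" .
  show ?thesis unfolding has_inverse_def using right left by blast
qed

lemma has_inverse_scaleR: fixes y :: "'a::real_algebra_1"
  assumes "has_inverse y" "r \<noteq> 0" shows "has_inverse (r *\<^sub>R y)"
proof -
  obtain z where "y * z = 1" "z * y = 1" using assms(1) unfolding has_inverse_def by blast
  then have "(r *\<^sub>R y) * ((1 / r) *\<^sub>R z) = 1" "((1 / r) *\<^sub>R z) * (r *\<^sub>R y) = 1"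
    using assms(2) by simp_all
  then show ?thesis unfolding has_inverse_def by blast
qed

lemma sandwich_expand: fixes P W :: "'a::real_algebra_1"
  assumes WP: "W * P = (-2 * k) *\<^sub>R 1 - P * W"
    and PP: "P * P = (- m) *\<^sub>R 1"
  shows "(s *\<^sub>R 1 + P) * (t *\<^sub>R 1 + W) * (s *\<^sub>R 1 + P) =
   (s * t * s - 2 * s * k - t * m) *\<^sub>R 1 + (2 * s * t - 2 * k) *\<^sub>R P + (s * s + m) *\<^sub>R W"
proof -
  have PWP: "P * W * P = (-2 * k) *\<^sub>R P + m *\<^sub>R W"
  proof -
    have "P * W * P = P * (W * P)" by (simp add: mult.assoc)
    also have "\<dots> = (-2 * k) *\<^sub>R P - (P * P) * W" by (simp add: WP right_diff_distrib mult.assoc)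
    also have "\<dots> = (-2 * k) *\<^sub>R P + m *\<^sub>R W" by (simp add: PP)
    finally show ?thesis .
  qed
  have "(s *\<^sub>R 1 + P) * (t *\<^sub>R 1 + W) * (s *\<^sub>R 1 + P) =
     (s * t * s) *\<^sub>R 1 + (s * t) *\<^sub>R P + (s * s) *\<^sub>R W + s *\<^sub>R (W * P) + (t * s) *\<^sub>R P
       + t *\<^sub>R (P * P) + s *\<^sub>R (P * W) + P * W * P"
    by (simp add: distrib_left distrib_right scaleR_add_right add_ac mult_ac)
  also have "\<dots> = (s * t * s) *\<^sub>R 1 + (s * t) *\<^sub>R P + (s * s) *\<^sub>R W + s *\<^sub>R ((-2 * k) *\<^sub>R 1 - P * W)
       + (t * s) *\<^sub>R P + t *\<^sub>R ((- m) *\<^sub>R 1) + s *\<^sub>R (P * W) + ((-2 * k) *\<^sub>R P + m *\<^sub>R W)"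
    by (simp only: WP PP PWP)
  also have "\<dots> = (s * t * s - 2 * s * k - t * m) *\<^sub>R 1 + (2 * s * t - 2 * k) *\<^sub>R P + (s * s + m) *\<^sub>R W"
    by (simp add: scaleR_diff_right scaleR_add_left scaleR_diff_left algebra_simps;
        simp add: scaleR_add_left[symmetric])
  finally show ?thesis .
qed

lemma conjugate_mult: fixes P :: "'a::real_algebra_1" assumes PP: "P * P = (- m) *\<^sub>R 1"
  shows "(s *\<^sub>R 1 - P) * (s *\<^sub>R 1 + P) = (s * s + m) *\<^sub>R 1"
    and "(s *\<^sub>R 1 + P) * (s *\<^sub>R 1 - P) = (s * s + m) *\<^sub>R 1"
  by (simp_all add: distrib_left distrib_right left_diff_distrib right_diff_distrib PP
      scaleR_add_left scaleR_diff_right scaleR_add_right)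

section \<open>The sign cocycle of blade products\<close>

text \<open>In Cl_{n-1} one has e_A e_B = blade_sign A B e_(A \<triangle> B); the sign counts the inversions
 between A and B and the squares e_j^2 = -1.  It is a bicharacter of the symmetric difference.\<close>

definition inversions :: "nat set \<Rightarrow> nat set \<Rightarrow> (nat \<times> nat) set" where
  "inversions A B = {(i, j). i \<in> A \<and> j \<in> B \<and> j < i}"

lemma blade_sign_inversions:
  "blade_sign A B = (-1) ^ card (inversions A B) * (-1) ^ card (A \<inter> B)"
  by (simp add: blade_sign_def inversions_def)

lemma finite_inversions: "finite A \<Longrightarrow> finite B \<Longrightarrow> finite (inversions A B)"
  by (rule finite_subset[of _ "A \<times> B"]) (auto simp: inversions_def)

lemma parity_sym_diff: assumes "finite X" "finite Y"
  shows "(-1::real) ^ card (sym_diff X Y) = (-1) ^ card X * (-1) ^ card Y"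
proof -
  have c1: "card X = card (X \<inter> Y) + card (X - Y)" using card_Int_Diff[OF assms(1)] .
  have c2: "card Y = card (X \<inter> Y) + card (Y - X)"
    using card_Int_Diff[OF assms(2), of X] by (simp add: Int_commute)
  have c3: "card (sym_diff X Y) = card (X - Y) + card (Y - X)"
    by (rule card_Un_disjoint) (use assms in auto)
  have "card X + card Y = card (sym_diff X Y) + 2 * card (X \<inter> Y)" using c1 c2 c3 by simp
  then have "(-1::real) ^ (card X + card Y) = (-1) ^ card (sym_diff X Y)"
    by (simp add: power_add power_mult)
  then show ?thesis by (simp add: power_add)
qed

lemma blade_sign_sym_diff_left: assumes "finite A" "finite B" "finite C"
  shows "blade_sign (sym_diff A B) C = blade_sign A C * blade_sign B C"
proof -
  have 1: "inversions (sym_diff A B) C = sym_diff (inversions A C) (inversions B C)"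
    by (auto simp: inversions_def)
  have 2: "(sym_diff A B) \<inter> C = sym_diff (A \<inter> C) (B \<inter> C)" by auto
  show ?thesis unfolding blade_sign_inversions 1 2
    using parity_sym_diff[OF finite_inversions[OF assms(1,3)] finite_inversions[OF assms(2,3)]]
      parity_sym_diff[of "A \<inter> C" "B \<inter> C"] assms by simp
qed

lemma blade_sign_sym_diff_right: assumes "finite A" "finite B" "finite C"
  shows "blade_sign A (sym_diff B C) = blade_sign A B * blade_sign A C"
proof -
  have 1: "inversions A (sym_diff B C) = sym_diff (inversions A B) (inversions A C)"
    by (auto simp: inversions_def)
  have 2: "A \<inter> (sym_diff B C) = sym_diff (A \<inter> B) (A \<inter> C)" by auto
  show ?thesis unfolding blade_sign_inversions 1 2
    using parity_sym_diff[OF finite_inversions[OF assms(1,2)] finite_inversions[OF assms(1,3)]]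
      parity_sym_diff[of "A \<inter> B" "A \<inter> C"] assms by simp
qed

text \<open>The cocycle identity expresses associativity of the blade product.\<close>

lemma blade_sign_cocycle: assumes "finite A" "finite B" "finite C"
  shows "blade_sign A B * blade_sign (sym_diff A B) C = blade_sign A (sym_diff B C) * blade_sign B C"
  using assms by (simp add: blade_sign_sym_diff_left blade_sign_sym_diff_right mult_ac)

lemma blade_sign_empty_left [simp]: "blade_sign {} B = 1"
  by (simp add: blade_sign_inversions inversions_def)

lemma blade_sign_empty_right [simp]: "blade_sign A {} = 1"
  by (simp add: blade_sign_inversions inversions_def)

lemma blade_sign_singletons:
  "blade_sign {a} {c} = (if c < a then -1 else 1) * (if a = c then -1 else 1)"
proof -
  have "inversions {a} {c} = (if c < a then {(a, c)} else {})" by (auto simp: inversions_def)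
  moreover have "{a} \<inter> {c} = (if a = c then {a} else {})" by auto
  ultimately show ?thesis by (simp add: blade_sign_inversions)
qed

lemma blade_sign_below: assumes "\<forall>x\<in>A. a < x" shows "blade_sign {a} A = 1"
proof -
  have "inversions {a} A = {}" using assms by (auto simp: inversions_def)
  moreover have "{a} \<inter> A = {}" using assms by auto
  ultimately show ?thesis by (simp add: blade_sign_inversions)
qed

lemma blade_sign_unit: "blade_sign A B = 1 \<or> blade_sign A B = -1"
  unfolding blade_sign_inversions power_add[symmetric]
  by (cases "even (card (inversions A B) + card (A \<inter> B))") auto

section \<open>Clifford generators in the matrix algebra\<close>

text \<open>With eps = e_1 the products
 X_j = eps e_j (2 \<le> j \<le> n) again satisfy the Clifford relations of Cl_{n-1}, and anticommute
 with eps.\<close>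

locale clifford_gens =
  fixes n :: nat and e :: "nat \<Rightarrow> 'm::finite cmat"
  assumes n2: "2 \<le> n"
    and rel: "\<And>i j. i \<in> {1..n} \<Longrightarrow> j \<in> {1..n} \<Longrightarrow>
                e i * e j + e j * e i = (if i = j then -2 else 0)"
    and skew: "\<And>i. i \<in> {1..n} \<Longrightarrow> adjoint (e i) = - e i"
begin

abbreviation eps where "eps \<equiv> e 1"

definition X :: "nat \<Rightarrow> 'm cmat" where "X j = eps * e j"

lemma e_square: assumes "i \<in> {1..n}" shows "e i * e i = -1"
proof -
  have "e i * e i + e i * e i = (2 * -1) *\<^sub>R 1" using rel[OF assms assms] by (simp add: scaleR_conv_of_real)
  then show ?thesis using half_of_double by fastforce
qed

lemma e_anticommute: "i \<in> {1..n} \<Longrightarrow> j \<in> {1..n} \<Longrightarrow> i \<noteq> j \<Longrightarrow> e i * e j = - (e j * e i)"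
  using rel[of i j] by (simp add: eq_neg_iff_add_eq_0)

lemma one_index: "1 \<in> {1..n}" using n2 by simp

lemma eps_square: "eps * eps = -1" using e_square[OF one_index] .

lemma adjoint_eps: "adjoint eps = - eps" using skew[OF one_index] .

lemma e_eps: "j \<in> {2..n} \<Longrightarrow> e j * eps = - (eps * e j)"
  using e_anticommute[of j 1] one_index by auto

lemma X_square: assumes "j \<in> {2..n}" shows "X j * X j = -1"
proof -
  have j: "j \<in> {1..n}" using assms by auto
  have "X j * X j = eps * (e j * eps) * e j" by (simp add: X_def mult.assoc)
  also have "\<dots> = - (eps * eps * (e j * e j))" using e_eps[OF assms] by (simp add: mult.assoc)
  also have "\<dots> = -1" using eps_square e_square[OF j] by simp
  finally show ?thesis .
qed

lemma X_eq_e_mult: assumes "i \<in> {2..n}" shows "X i * X j = e i * e j"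
proof -
  have "X i * X j = eps * (e i * eps) * e j" by (simp add: X_def mult.assoc)
  also have "\<dots> = - (eps * eps * (e i * e j))" using e_eps[OF assms] by (simp add: mult.assoc)
  also have "\<dots> = e i * e j" using eps_square by simp
  finally show ?thesis .
qed

lemma X_anticommute: assumes "i \<in> {2..n}" "j \<in> {2..n}" "i \<noteq> j"
  shows "X i * X j = - (X j * X i)"
  using X_eq_e_mult[OF assms(1)] X_eq_e_mult[OF assms(2)] e_anticommute[of i j] assms by auto

lemma eps_X: assumes "j \<in> {2..n}" shows "eps * X j = - (X j * eps)"
proof -
  have "X j * eps = eps * (e j * eps)" by (simp add: X_def mult.assoc)
  also have "\<dots> = - (eps * eps * e j)" using e_eps[OF assms] by (simp add: mult.assoc)
  finally show ?thesis using eps_square by (simp add: X_def mult.assoc)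
qed

text \<open>The blade X_A = X_{a_1} ... X_{a_k} for A = {a_1 < ... < a_k}; tau(e_A) = X_A.\<close>

definition blade :: "nat set \<Rightarrow> 'm cmat" where
  "blade A = foldr (\<lambda>j M. X j * M) (sorted_list_of_set A) 1"

lemma blade_empty [simp]: "blade {} = 1" by (simp add: blade_def)

lemma blade_insert_min: assumes "finite A" "\<forall>x\<in>A. c < x"
  shows "blade (insert c A) = X c * blade A"
proof -
  have "c \<notin> A" using assms by auto
  then have "sorted_list_of_set (insert c A) = insort c (sorted_list_of_set A)"
    using assms by (simp add: sorted_list_of_set_insert)
  also have "\<dots> = c # sorted_list_of_set A"
    by (rule insort_is_Cons) (use assms in auto)
  finally show ?thesis by (simp add: blade_def)
qed

lemma blade_singleton: "blade {j} = X j"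
  using blade_insert_min[of "{}" j] by simp

lemma commute_blade: assumes "finite A" "\<forall>j\<in>A. U * X j = \<sigma> j *\<^sub>R (X j * U)"
  shows "U * blade A = (\<Prod>j\<in>A. \<sigma> j) *\<^sub>R (blade A * U)"
  using assms
proof (induction A rule: finite_linorder_min_induct)
  case empty
  then show ?case by simp
next
  case (insert b A)
  have bA: "b \<notin> A" using insert by auto
  have ins: "blade (insert b A) = X b * blade A" using blade_insert_min insert(1,2) by blast
  have "U * blade (insert b A) = (U * X b) * blade A" using ins by (simp add: mult.assoc)
  also have "\<dots> = \<sigma> b *\<^sub>R (X b * (U * blade A))" using insert by (simp add: mult.assoc)
  also have "\<dots> = \<sigma> b *\<^sub>R (X b * ((\<Prod>j\<in>A. \<sigma> j) *\<^sub>R (blade A * U)))" using insert by simp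
  also have "\<dots> = (\<Prod>j\<in>insert b A. \<sigma> j) *\<^sub>R (blade (insert b A) * U)"
    using ins bA insert(1) by (simp add: mult.assoc)
  finally show ?case .
qed

lemma X_mult_blade: assumes "a \<in> {2..n}" "C \<subseteq> {2..n}"
  shows "X a * blade C = blade_sign {a} C *\<^sub>R blade (sym_diff {a} C)"
proof -
  have "finite C" using assms(2) finite_subset by blast
  then show ?thesis using assms(2)
  proof (induction C rule: finite_linorder_min_induct)
    case empty
    then show ?case by (simp add: blade_singleton)
  next
    case (insert c C)
    have cC: "c \<notin> C" using insert by auto
    have c2: "c \<in> {2..n}" and C2: "C \<subseteq> {2..n}" using insert by auto
    have IH: "X a * blade C = blade_sign {a} C *\<^sub>R blade (sym_diff {a} C)" using insert C2 by blast
    have ins: "blade (insert c C) = X c * blade C" using blade_insert_min insert by blast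
    have sign: "blade_sign {a} (insert c C) = blade_sign {a} {c} * blade_sign {a} C"
    proof -
      have "insert c C = sym_diff {c} C" using cC by auto
      then show ?thesis using blade_sign_sym_diff_right[of "{a}" "{c}" C] insert by simp
    qed
    consider "a < c" | "a = c" | "c < a" by linarith
    then show ?case
    proof cases
      case 1
      have "sym_diff {a} (insert c C) = insert a (insert c C)" using 1 insert by auto
      moreover have "blade (insert a (insert c C)) = X a * blade (insert c C)"
        using 1 insert by (intro blade_insert_min) auto
      moreover have "blade_sign {a} (insert c C) = 1" using 1 insert by (intro blade_sign_below) auto
      ultimately show ?thesis by simp
    next
      case 2
      have "X a * blade (insert c C) = (X a * X a) * blade C" using ins 2 by (simp add: mult.assoc)
      also have "\<dots> = - blade C" using X_square[OF assms(1)] by simp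
      finally have L: "X a * blade (insert c C) = - blade C" .
      have "sym_diff {a} (insert c C) = C" using 2 cC by auto
      moreover have "blade_sign {a} C = 1" using 2 insert by (intro blade_sign_below) auto
      ultimately show ?thesis using L sign 2 by (simp add: blade_sign_singletons)
    next
      case 3
      have "X a * blade (insert c C) = (X a * X c) * blade C" using ins by (simp add: mult.assoc)
      also have "\<dots> = - (X c * (X a * blade C))"
        using X_anticommute[OF assms(1) c2] 3 by (simp add: mult.assoc)
      also have "\<dots> = - (blade_sign {a} C *\<^sub>R (X c * blade (sym_diff {a} C)))" using IH by simp
      also have "X c * blade (sym_diff {a} C) = blade (insert c (sym_diff {a} C))"
        using 3 insert by (intro blade_insert_min[symmetric]) auto
      also have "insert c (sym_diff {a} C) = sym_diff {a} (insert c C)" using 3 cC by auto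
      finally show ?thesis using sign 3 by (simp add: blade_sign_singletons)
    qed
  qed
qed

lemma blade_mult: assumes "A \<subseteq> {2..n}" "B \<subseteq> {2..n}"
  shows "blade A * blade B = blade_sign A B *\<^sub>R blade (sym_diff A B)"
proof -
  have fB: "finite B" using assms(2) finite_subset by blast
  have "finite A" using assms(1) finite_subset by blast
  then show ?thesis using assms(1)
  proof (induction A rule: finite_linorder_min_induct)
    case empty
    then show ?case by simp
  next
    case (insert a A)
    have aA: "a \<notin> A" using insert by auto
    have a2: "a \<in> {2..n}" and A2: "A \<subseteq> {2..n}" using insert by auto
    have IH: "blade A * blade B = blade_sign A B *\<^sub>R blade (sym_diff A B)" using insert A2 by blast
    have AB: "sym_diff A B \<subseteq> {2..n}" using A2 assms(2) by auto
    have "blade (insert a A) * blade B = X a * (blade A * blade B)"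
      using blade_insert_min insert by (simp add: mult.assoc)
    also have "\<dots> = blade_sign A B *\<^sub>R (X a * blade (sym_diff A B))" using IH by simp
    also have "\<dots> = (blade_sign A B * blade_sign {a} (sym_diff A B)) *\<^sub>R blade (sym_diff {a} (sym_diff A B))"
      using X_mult_blade[OF a2 AB] by simp
    also have "sym_diff {a} (sym_diff A B) = sym_diff (insert a A) B" using aA by auto
    also have "blade_sign A B * blade_sign {a} (sym_diff A B) = blade_sign (insert a A) B"
    proof -
      have "blade_sign {a} A * blade_sign (sym_diff {a} A) B = blade_sign {a} (sym_diff A B) * blade_sign A B"
        using blade_sign_cocycle[of "{a}" A B] insert fB by simp
      moreover have "blade_sign {a} A = 1" using insert by (intro blade_sign_below) auto
      moreover have "sym_diff {a} A = insert a A" using aA by auto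
      ultimately show ?thesis by (simp add: mult.commute)
    qed
    finally show ?case .
  qed
qed

lemma eps_blade: assumes "A \<subseteq> {2..n}" shows "eps * blade A = (-1) ^ card A *\<^sub>R (blade A * eps)"
proof -
  have "finite A" using assms finite_subset by blast
  moreover have "\<forall>j\<in>A. eps * X j = (-1) *\<^sub>R (X j * eps)" using assms eps_X by auto
  ultimately show ?thesis using commute_blade[of A eps "\<lambda>_. -1"] by simp
qed

text \<open>Every nonempty blade is traceless: if |A| is odd it anticommutes with eps, otherwise with
 any X_j, j \<in> A.\<close>

lemma mtrace_blade: assumes "A \<subseteq> {2..n}" "A \<noteq> {}" shows "mtrace (blade A) = 0"
proof -
  have fA: "finite A" using assms(1) finite_subset by blast
  show ?thesis
  proof (cases "even (card A)")
    case False
    have "eps * blade A = - (blade A * eps)" using eps_blade[OF assms(1)] False by simp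
    then show ?thesis by (rule mtrace_anticommuting[OF eps_square])
  next
    case True
    obtain j where j: "j \<in> A" using assms(2) by blast
    have j2: "j \<in> {2..n}" using j assms(1) by auto
    define \<sigma> where "\<sigma> i = (if i = j then 1 else (-1::real))" for i
    have "\<forall>i\<in>A. X j * X i = \<sigma> i *\<^sub>R (X i * X j)"
      using X_anticommute[OF j2] assms(1) by (auto simp: \<sigma>_def)
    then have 1: "X j * blade A = (\<Prod>i\<in>A. \<sigma> i) *\<^sub>R (blade A * X j)" using commute_blade[OF fA] by blast
    have "(\<Prod>i\<in>A. \<sigma> i) = \<sigma> j * (\<Prod>i\<in>A - {j}. \<sigma> i)" using prod.remove[OF fA j] .
    also have "(\<Prod>i\<in>A - {j}. \<sigma> i) = (\<Prod>i\<in>A - {j}. -1)" by (rule prod.cong) (auto simp: \<sigma>_def)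
    also have "\<dots> = (-1) ^ (card A - 1)" using j fA by simp
    also have "(-1::real) ^ (card A - 1) = -1"
    proof -
      have "card A > 0" using fA j card_gt_0_iff by blast
      then have "odd (card A - 1)" using True by (cases "card A") auto
      then show ?thesis by simp
    qed
    finally have "(\<Prod>i\<in>A. \<sigma> i) = -1" by (simp add: \<sigma>_def)
    then have "X j * blade A = - (blade A * X j)" using 1 by simp
    then show ?thesis by (rule mtrace_anticommuting[OF X_square[OF j2]])
  qed
qed

text \<open>tau_alg is the map tau of the paper, with values in the algebra cmat.\<close>

definition tau_alg :: "mv \<Rightarrow> 'm cmat" where
  "tau_alg a = (\<Sum>A\<in>Pow {2..n}. a A *\<^sub>R blade A)"

lemma tau_alg_mult: "tau_alg (cl_mult n a b) = tau_alg a * tau_alg b"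
proof -
  let ?P = "Pow {2..n}"
  have scaleR_if: "(if P then r else 0) *\<^sub>R Y = (if P then r *\<^sub>R Y else 0)" for P r and Y :: "'m cmat"
    by simp
  have "tau_alg (cl_mult n a b) = (\<Sum>C\<in>?P. \<Sum>A\<in>?P. \<Sum>B\<in>?P.
      (if sym_diff A B = C then (blade_sign A B * a A * b B) *\<^sub>R blade C else 0))"
    unfolding tau_alg_def cl_mult_def by (simp add: scaleR_sum_left scaleR_if)
  also have "\<dots> = (\<Sum>A\<in>?P. \<Sum>B\<in>?P. \<Sum>C\<in>?P.
      (if sym_diff A B = C then (blade_sign A B * a A * b B) *\<^sub>R blade C else 0))"
    by (subst sum.swap) (rule sum.cong[OF refl], rule sum.swap)
  also have "\<dots> = (\<Sum>A\<in>?P. \<Sum>B\<in>?P. (blade_sign A B * a A * b B) *\<^sub>R blade (sym_diff A B))"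
  proof (intro sum.cong refl)
    fix A B assume "A \<in> ?P" "B \<in> ?P"
    then have "sym_diff A B \<in> ?P" by auto
    then show "(\<Sum>C\<in>?P. (if sym_diff A B = C then (blade_sign A B * a A * b B) *\<^sub>R blade C else 0))
      = (blade_sign A B * a A * b B) *\<^sub>R blade (sym_diff A B)"
      by (simp add: sum.delta)
  qed
  also have "\<dots> = (\<Sum>A\<in>?P. \<Sum>B\<in>?P. (a A *\<^sub>R blade A) * (b B *\<^sub>R blade B))"
  proof (intro sum.cong refl)
    fix A B assume "A \<in> ?P" "B \<in> ?P"
    then show "(blade_sign A B * a A * b B) *\<^sub>R blade (sym_diff A B) = (a A *\<^sub>R blade A) * (b B *\<^sub>R blade B)"
      using blade_mult[of A B] by (simp add: mult_ac)
  qed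
  also have "\<dots> = tau_alg a * tau_alg b"
    unfolding tau_alg_def by (simp only: sum_distrib_right) (simp only: sum_distrib_left)
  finally show ?thesis .
qed

lemma tau_alg_sub: "tau_alg (cl_sub a b) = tau_alg a - tau_alg b"
  unfolding tau_alg_def cl_sub_def by (simp add: scaleR_diff_left sum_subtractf)

lemma tau_alg_scale: "tau_alg (cl_scale r a) = r *\<^sub>R tau_alg a"
  unfolding tau_alg_def cl_scale_def by (simp add: scaleR_sum_right)

lemma tau_alg_zero: "tau_alg (\<lambda>_. 0) = 0"
  unfolding tau_alg_def by simp

lemma tau_alg_one: "tau_alg cl_one = 1"
proof -
  have "tau_alg cl_one = (\<Sum>A\<in>Pow {2..n}. (if A = {} then blade A else 0))"
    unfolding tau_alg_def cl_one_def cl_scalar_def by (rule sum.cong) auto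
  also have "\<dots> = blade {}" by (simp add: sum.delta')
  finally show ?thesis by simp
qed

lemma tau_alg_foldr: "tau_alg (foldr (cl_mult n) vs cl_one) = foldr (*) (map tau_alg vs) 1"
  by (induction vs) (simp_all add: tau_alg_one tau_alg_mult)

text \<open>tau is injective on Cl_{n-1}: the coefficient of e_B is recovered as a multiple of the
 trace of tau(w) X_B^{-1}, since blades other than 1 are traceless.\<close>

lemma tau_alg_injective: assumes "w \<in> CL n" "tau_alg w = 0" shows "w = (\<lambda>_. 0)"
proof
  fix B
  show "w B = 0"
  proof (cases "B \<subseteq> {2..n}")
    case False
    then show ?thesis using assms(1) unfolding CL_def by auto
  next
    case B: True
    have "0 = mtrace (tau_alg w * blade B)" using assms(2) by (simp add: mtrace_zero)
    also have "\<dots> = (\<Sum>A\<in>Pow {2..n}. of_real (w A) * mtrace (blade A * blade B))"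
      unfolding tau_alg_def by (simp add: sum_distrib_right mtrace_sum mtrace_scaleR)
    also have "\<dots> = (\<Sum>A\<in>Pow {2..n}.
        (if A = B then of_real (w B * blade_sign B B) * of_nat CARD('m) else 0))"
    proof (rule sum.cong[OF refl])
      fix A assume A: "A \<in> Pow {2..n}"
      have "mtrace (blade A * blade B) = of_real (blade_sign A B) * mtrace (blade (sym_diff A B))"
        using blade_mult[of A B] A B by (simp add: mtrace_scaleR)
      moreover have "mtrace (blade (sym_diff A B)) = (if A = B then of_nat CARD('m) else 0)"
        using mtrace_blade[of "sym_diff A B"] A B by (auto simp: mtrace_one)
      ultimately show "of_real (w A) * mtrace (blade A * blade B) =
        (if A = B then of_real (w B * blade_sign B B) * of_nat CARD('m) else 0)" by auto
    qed
    also have "\<dots> = of_real (w B * blade_sign B B) * of_nat CARD('m)"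
      using B by (simp add: sum.delta')
    finally have "w B * blade_sign B B = 0" by simp
    then show ?thesis using blade_sign_unit[of B B] by auto
  qed
qed

lemma cl_mult_CL: "cl_mult n a b \<in> CL n"
  unfolding CL_def cl_mult_def
proof (intro CollectI allI impI sum.neutral ballI)
  fix A A' B' assume "\<not> A \<subseteq> {2..n}" "A' \<in> Pow {2..n}" "B' \<in> Pow {2..n}"
  then have "sym_diff A' B' \<noteq> A" by auto
  then show "(if sym_diff A' B' = A then blade_sign A' B' * a A' * b B' else 0) = 0" by simp
qed

lemma cl_rev_CL: "a \<in> CL n \<Longrightarrow> cl_rev a \<in> CL n"
  unfolding CL_def cl_rev_def by auto

lemma cl_sub_CL: "a \<in> CL n \<Longrightarrow> b \<in> CL n \<Longrightarrow> cl_sub a b \<in> CL n"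
  unfolding CL_def cl_sub_def by auto

lemma clifford_group_CL: assumes "b \<in> clifford_group n \<union> {\<lambda>_. 0}" shows "b \<in> CL n"
proof (cases "b = (\<lambda>_. 0)")
  case True
  then show ?thesis by (simp add: CL_def)
next
  case False
  then show ?thesis using assms unfolding clifford_group_def by (auto simp: neq_Nil_conv cl_mult_CL)
qed

lemma vecs_CL: "x \<in> vecs n \<Longrightarrow> x \<in> CL n"
  unfolding vecs_def CL_def by fastforce

text \<open>The principal automorphism becomes conjugation by eps, because eps anticommutes with
 every X_j.\<close>

lemma tau_alg_prin: "tau_alg (cl_prin a) = eps * tau_alg a * (- eps)"
proof -
  have "eps * tau_alg a * (- eps) = (\<Sum>A\<in>Pow {2..n}. a A *\<^sub>R (eps * blade A * (- eps)))"
    unfolding tau_alg_def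
    by (simp only: sum_distrib_left sum_distrib_right mult_scaleR_right mult_scaleR_left)
  also have "\<dots> = (\<Sum>A\<in>Pow {2..n}. ((-1) ^ card A * a A) *\<^sub>R blade A)"
  proof (rule sum.cong[OF refl])
    fix A assume "A \<in> Pow {2..n}"
    then have "eps * blade A * (- eps) = (-1) ^ card A *\<^sub>R (blade A * (eps * (- eps)))"
      using eps_blade[of A] by (simp add: mult.assoc)
    also have "\<dots> = (-1) ^ card A *\<^sub>R blade A" using eps_square by simp
    finally show "a A *\<^sub>R (eps * blade A * (- eps)) = ((-1) ^ card A * a A) *\<^sub>R blade A" by simp
  qed
  finally show ?thesis unfolding tau_alg_def cl_prin_def by (simp add: sum_negf)
qed

text \<open>The matrix counterpart of reversion: an anti-automorphism fixing every X_j.\<close>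

definition mrev :: "'m cmat \<Rightarrow> 'm cmat" where "mrev Y = - (eps * adjoint Y * eps)"

lemma mrev_mult: "mrev (Y * Z) = mrev Z * mrev Y"
proof -
  have "mrev Z * mrev Y = eps * adjoint Z * (eps * eps) * adjoint Y * eps" by (simp add: mrev_def mult.assoc)
  also have "\<dots> = mrev (Y * Z)" using eps_square by (simp add: mrev_def adjoint_mult mult.assoc)
  finally show ?thesis by simp
qed

lemma mrev_one: "mrev 1 = 1" using eps_square by (simp add: mrev_def adjoint_one)
lemma mrev_zero: "mrev 0 = 0" by (simp add: mrev_def adjoint_zero)
lemma mrev_add: "mrev (Y + Z) = mrev Y + mrev Z"
  by (simp add: mrev_def adjoint_add distrib_left distrib_right)
lemma mrev_diff: "mrev (Y - Z) = mrev Y - mrev Z"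
  by (simp add: mrev_def adjoint_diff left_diff_distrib right_diff_distrib)
lemma mrev_scaleR: "mrev (r *\<^sub>R Y) = r *\<^sub>R mrev Y" by (simp add: mrev_def adjoint_scaleR)
lemma mrev_sum: "finite S \<Longrightarrow> mrev (sum f S) = (\<Sum>i\<in>S. mrev (f i))"
  by (induction S rule: finite_induct) (simp_all add: mrev_zero mrev_add)

lemma mrev_mrev: "mrev (mrev Y) = Y"
proof -
  have "mrev (mrev Y) = eps * eps * Y * (eps * eps)"
    unfolding mrev_def adjoint_minus adjoint_mult adjoint_adjoint adjoint_eps by (simp add: mult.assoc)
  then show ?thesis using eps_square by simp
qed

lemma mrev_has_inverse: "has_inverse Y \<Longrightarrow> has_inverse (mrev Y)"
  unfolding has_inverse_def by (metis mrev_mult mrev_one)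

lemma mrev_X: assumes "j \<in> {2..n}" shows "mrev (X j) = X j"
proof -
  have j: "j \<in> {1..n}" using assms by auto
  have "mrev (X j) = - (eps * e j * (eps * eps))"
    unfolding mrev_def X_def adjoint_mult adjoint_eps skew[OF j] by (simp add: mult.assoc)
  also have "\<dots> = X j" using eps_square by (simp add: X_def)
  finally show ?thesis .
qed

text \<open>The reversion sign of a k-blade is (-1)^(k(k-1)/2); this is its recursion in k.\<close>

lemma reversion_exponent: "Suc k * k div 2 = k * (k - 1) div 2 + k"
proof (cases k)
  case 0 then show ?thesis by simp
next
  case (Suc m)
  have "Suc k * k = k * (k - 1) + 2 * k" using Suc by simp
  moreover have "even (k * (k - 1))" by (cases "even k") auto
  ultimately show ?thesis by auto
qed

lemma mrev_blade: assumes "A \<subseteq> {2..n}"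
  shows "mrev (blade A) = (-1) ^ (card A * (card A - 1) div 2) *\<^sub>R blade A"
proof -
  have "finite A" using assms finite_subset by blast
  then show ?thesis using assms
  proof (induction A rule: finite_linorder_min_induct)
    case empty
    then show ?case by (simp add: mrev_one)
  next
    case (insert c C)
    have cC: "c \<notin> C" using insert by auto
    have c2: "c \<in> {2..n}" and C2: "C \<subseteq> {2..n}" using insert by auto
    have ins: "blade (insert c C) = X c * blade C" using blade_insert_min insert by blast
    have "\<forall>j\<in>C. X c * X j = (-1) *\<^sub>R (X j * X c)"
      using X_anticommute[OF c2] C2 insert by force
    then have comm: "X c * blade C = (-1) ^ card C *\<^sub>R (blade C * X c)"
      using commute_blade[of C "X c" "\<lambda>_. -1"] insert by simp
    have comm2: "blade C * X c = (-1) ^ card C *\<^sub>R (X c * blade C)"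
    proof -
      have "(-1) ^ card C *\<^sub>R (X c * blade C) = ((-1) ^ card C * (-1) ^ card C) *\<^sub>R (blade C * X c)"
        using comm by simp
      then show ?thesis by (simp add: power_add[symmetric] mult_2[symmetric] power_mult)
    qed
    have "mrev (blade (insert c C)) = mrev (blade C) * X c" using ins mrev_mult mrev_X[OF c2] by simp
    also have "\<dots> = ((-1) ^ (card C * (card C - 1) div 2) * (-1) ^ card C) *\<^sub>R blade (insert c C)"
      using insert C2 comm2 ins by simp
    also have "(-1::real) ^ (card C * (card C - 1) div 2) * (-1) ^ card C
       = (-1) ^ (card (insert c C) * (card (insert c C) - 1) div 2)"
      using cC insert(1) reversion_exponent[of "card C"] by (simp add: power_add)
    finally show ?case .
  qed
qed

lemma tau_alg_rev: "tau_alg (cl_rev a) = mrev (tau_alg a)"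
proof -
  have "mrev (tau_alg a) = (\<Sum>A\<in>Pow {2..n}. a A *\<^sub>R mrev (blade A))"
    unfolding tau_alg_def by (simp add: mrev_sum mrev_scaleR)
  also have "\<dots> = tau_alg (cl_rev a)"
    unfolding tau_alg_def cl_rev_def by (rule sum.cong) (auto simp: mrev_blade)
  finally show ?thesis by simp
qed

subsection \<open>Paravectors\<close>

text \<open>Paravectors s + sum c_j X_j are the images of E^n = R + E^{n-1} under tau.\<close>

definition vpart :: "(nat \<Rightarrow> real) \<Rightarrow> 'm cmat" where
  "vpart c = (\<Sum>j\<in>{2..n}. c j *\<^sub>R X j)"

definition paravector :: "'m cmat \<Rightarrow> bool" where
  "paravector y \<longleftrightarrow> (\<exists>s c. y = s *\<^sub>R 1 + vpart c)"

lemma vpart_linear: "vpart (\<lambda>j. a * c j + b * d j) = a *\<^sub>R vpart c + b *\<^sub>R vpart d"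
  unfolding vpart_def by (simp add: scaleR_add_left sum.distrib scaleR_sum_right)

lemma X_anticommutator: assumes "i \<in> {2..n}" "j \<in> {2..n}"
  shows "X i * X j + X j * X i = (if i = j then (-2::real) *\<^sub>R 1 else 0)"
  using X_square[OF assms(1)] X_anticommute[OF assms] by (auto simp: scaleR_2)

lemma vpart_anticommutator: "vpart c * vpart d + vpart d * vpart c = (-2 * (\<Sum>j\<in>{2..n}. c j * d j)) *\<^sub>R 1"
proof -
  let ?S = "{2..n}"
  have 1: "vpart c * vpart d = (\<Sum>i\<in>?S. \<Sum>j\<in>?S. (c i * d j) *\<^sub>R (X i * X j))"
    unfolding vpart_def by (simp only: sum_distrib_right) (simp add: sum_distrib_left mult.commute)
  have "vpart d * vpart c = (\<Sum>i\<in>?S. \<Sum>j\<in>?S. (d i * c j) *\<^sub>R (X i * X j))"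
    unfolding vpart_def by (simp only: sum_distrib_right) (simp add: sum_distrib_left mult.commute)
  also have "\<dots> = (\<Sum>j\<in>?S. \<Sum>i\<in>?S. (d i * c j) *\<^sub>R (X i * X j))" by (rule sum.swap)
  finally have 2: "vpart d * vpart c = (\<Sum>i\<in>?S. \<Sum>j\<in>?S. (c i * d j) *\<^sub>R (X j * X i))"
    by (simp add: mult.commute)
  have "vpart c * vpart d + vpart d * vpart c =
      (\<Sum>i\<in>?S. \<Sum>j\<in>?S. (c i * d j) *\<^sub>R (X i * X j + X j * X i))"
    unfolding 1 2 by (simp add: sum.distrib[symmetric] scaleR_add_right)
  also have "\<dots> = (\<Sum>i\<in>?S. \<Sum>j\<in>?S. (if i = j then (-2 * (c i * d i)) *\<^sub>R 1 else 0))"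
    by (intro sum.cong refl) (auto simp: X_anticommutator)
  also have "\<dots> = (-2 * (\<Sum>j\<in>?S. c j * d j)) *\<^sub>R 1"
    by (simp add: sum.delta scaleR_sum_left sum_distrib_left)
  finally show ?thesis .
qed

lemma vpart_square: "vpart c * vpart c = (- (\<Sum>j\<in>{2..n}. c j * c j)) *\<^sub>R 1"
  by (rule half_of_double) (simp add: vpart_anticommutator)

lemma paravector_scalar: "paravector (s *\<^sub>R 1)"
  unfolding paravector_def by (rule exI[of _ s], rule exI[of _ "\<lambda>_. 0"]) (simp add: vpart_def)

lemma paravector_vpart: "paravector (vpart c)"
  unfolding paravector_def by (rule exI[of _ 0], rule exI[of _ c]) simp

lemma paravector_linear: assumes "paravector p" "paravector q"
  shows "paravector (a *\<^sub>R p + b *\<^sub>R q)"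
proof -
  obtain s c t d where "p = s *\<^sub>R 1 + vpart c" "q = t *\<^sub>R 1 + vpart d"
    using assms unfolding paravector_def by blast
  then have "a *\<^sub>R p + b *\<^sub>R q = (a * s + b * t) *\<^sub>R 1 + vpart (\<lambda>j. a * c j + b * d j)"
    by (simp add: vpart_linear scaleR_add_right scaleR_add_left add_ac)
  then show ?thesis unfolding paravector_def by blast
qed

lemma paravector_diff: "paravector p \<Longrightarrow> paravector q \<Longrightarrow> paravector (p - q)"
  using paravector_linear[of p q 1 "-1"] by simp

lemma paravector_scaleR: "paravector p \<Longrightarrow> paravector (a *\<^sub>R p)"
  using paravector_linear[of p 0 a 0] paravector_scalar[of 0] by simp

lemma mrev_paravector: "paravector p \<Longrightarrow> mrev p = p"
  unfolding paravector_def vpart_def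
  by (auto simp: mrev_add mrev_scaleR mrev_one mrev_sum mrev_X)

lemma paravector_sandwich: assumes "paravector p" "paravector y" shows "paravector (p * y * p)"
proof -
  obtain s c t d where p: "p = s *\<^sub>R 1 + vpart c" and y: "y = t *\<^sub>R 1 + vpart d"
    using assms unfolding paravector_def by blast
  define k where "k = (\<Sum>j\<in>{2..n}. c j * d j)"
  define m where "m = (\<Sum>j\<in>{2..n}. c j * c j)"
  have WP: "vpart d * vpart c = (-2 * k) *\<^sub>R 1 - vpart c * vpart d"
  proof -
    have "vpart d * vpart c = (vpart c * vpart d + vpart d * vpart c) - vpart c * vpart d" by simp
    then show ?thesis unfolding vpart_anticommutator k_def .
  qed
  have PP: "vpart c * vpart c = (- m) *\<^sub>R 1" using vpart_square unfolding m_def .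
  have "p * y * p = (s * t * s - 2 * s * k - t * m) *\<^sub>R 1 + (2 * s * t - 2 * k) *\<^sub>R vpart c
      + (s * s + m) *\<^sub>R vpart d"
    unfolding p y by (rule sandwich_expand[OF WP PP])
  also have "\<dots> = (s * t * s - 2 * s * k - t * m) *\<^sub>R 1
      + vpart (\<lambda>j. (2 * s * t - 2 * k) * c j + (s * s + m) * d j)"
    by (simp add: vpart_linear add.assoc)
  finally show ?thesis unfolding paravector_def by blast
qed

text \<open>A nonzero paravector s + v has the paravector inverse (s - v)/(s^2 + |v|^2).\<close>

lemma paravector_inverse: assumes "paravector p" "p \<noteq> 0"
  shows "\<exists>q. paravector q \<and> p * q = 1 \<and> q * p = 1"
proof -
  obtain s c where p: "p = s *\<^sub>R 1 + vpart c" using assms unfolding paravector_def by blast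
  define N where "N = s * s + (\<Sum>j\<in>{2..n}. c j * c j)"
  have "N \<noteq> 0"
  proof
    assume N0: "N = 0"
    have "0 \<le> (\<Sum>j\<in>{2..n}. c j * c j)" by (intro sum_nonneg) simp
    then have "s * s = 0 \<and> (\<Sum>j\<in>{2..n}. c j * c j) = 0"
      using N0 unfolding N_def by (smt (verit) zero_le_square)
    then have "s = 0" "\<forall>j\<in>{2..n}. c j = 0"
      using sum_nonneg_eq_0_iff[of "{2..n}" "\<lambda>j. c j * c j"] by auto
    then have "p = 0" unfolding p vpart_def by simp
    with assms(2) show False by simp
  qed
  define q where "q = (1 / N) *\<^sub>R (s *\<^sub>R 1 - vpart c)"
  have "paravector q"
    unfolding q_def by (intro paravector_scaleR paravector_diff paravector_scalar paravector_vpart)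
  moreover have "p * q = 1"
    unfolding q_def p using conjugate_mult(2)[OF vpart_square[of c], of s] \<open>N \<noteq> 0\<close>
    by (simp add: N_def)
  moreover have "q * p = 1"
    unfolding q_def p using conjugate_mult(1)[OF vpart_square[of c], of s] \<open>N \<noteq> 0\<close>
    by (simp add: N_def)
  ultimately show ?thesis by blast
qed

lemma tau_alg_vec: assumes "x \<in> vecs n" shows "tau_alg x = x {} *\<^sub>R 1 + vpart (\<lambda>j. x {j})"
proof -
  let ?S = "insert {} ((\<lambda>j. {j}) ` {2..n})"
  have "tau_alg x = (\<Sum>A\<in>?S. x A *\<^sub>R blade A)"
    unfolding tau_alg_def
  proof (rule sum.mono_neutral_right[of "Pow {2..n}"], simp, fastforce, rule ballI)
    fix A assume "A \<in> Pow {2..n} - ?S"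
    then have "x A = 0" using assms unfolding vecs_def by auto
    then show "x A *\<^sub>R blade A = 0" by simp
  qed
  also have "\<dots> = x {} *\<^sub>R blade {} + (\<Sum>A\<in>(\<lambda>j. {j}) ` {2..n}. x A *\<^sub>R blade A)"
    by (rule sum.insert) auto
  also have "(\<Sum>A\<in>(\<lambda>j. {j}) ` {2..n}. x A *\<^sub>R blade A) = (\<Sum>j\<in>{2..n}. x {j} *\<^sub>R blade {j})"
    by (rule sum.reindex_cong[of "\<lambda>j. {j}"]) (auto simp: inj_on_def)
  finally show ?thesis by (simp add: vpart_def blade_singleton)
qed

lemma paravector_tau_alg_vec: "x \<in> vecs n \<Longrightarrow> paravector (tau_alg x)"
  using tau_alg_vec unfolding paravector_def by blast

text \<open>Products of paravectors: the image of the Clifford group (with 1) under tau.\<close>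

definition paravector_prod :: "'m cmat \<Rightarrow> bool" where
  "paravector_prod Y \<longleftrightarrow> (\<exists>ps. (\<forall>p\<in>set ps. paravector p) \<and> Y = foldr (*) ps 1)"

lemma foldr_mult_append: "foldr (*) (xs @ ys) (1::'a::monoid_mult) = foldr (*) xs 1 * foldr (*) ys 1"
  by (induction xs) (simp_all add: mult.assoc)

lemma paravector_prod_mult: assumes "paravector_prod Y" "paravector_prod Z"
  shows "paravector_prod (Y * Z)"
proof -
  obtain ps qs where "\<forall>p\<in>set ps. paravector p" "Y = foldr (*) ps 1"
    "\<forall>p\<in>set qs. paravector p" "Z = foldr (*) qs 1"
    using assms unfolding paravector_prod_def by blast
  then show ?thesis unfolding paravector_prod_def
    by (intro exI[of _ "ps @ qs"]) (auto simp: foldr_mult_append simp del: foldr_append)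
qed

lemma paravector_prod_single: "paravector p \<Longrightarrow> paravector_prod p"
  unfolding paravector_prod_def by (intro exI[of _ "[p]"]) simp

lemma paravector_twisted_conj: assumes "paravector_prod Z" "paravector P"
  shows "paravector (Z * P * mrev Z)"
proof -
  obtain ps where ps: "\<forall>p\<in>set ps. paravector p" "Z = foldr (*) ps 1"
    using assms(1) unfolding paravector_prod_def by blast
  have "paravector (foldr (*) ps 1 * P * mrev (foldr (*) ps 1))" using ps(1)
  proof (induction ps)
    case Nil
    then show ?case using assms(2) by (simp add: mrev_one)
  next
    case (Cons p ps)
    let ?Z = "foldr (*) ps 1"
    have "foldr (*) (p # ps) 1 * P * mrev (foldr (*) (p # ps) 1) = p * (?Z * P * mrev ?Z) * mrev p"
      by (simp add: mrev_mult mult.assoc)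
    also have "\<dots> = p * (?Z * P * mrev ?Z) * p" using Cons.prems mrev_paravector by simp
    finally show ?case using Cons paravector_sandwich by simp
  qed
  then show ?thesis using ps by simp
qed

lemma paravector_prod_inverse: assumes "\<forall>p\<in>set ps. \<exists>q. paravector q \<and> p * q = 1 \<and> q * p = 1"
  shows "\<exists>Z. paravector_prod Z \<and> foldr (*) ps 1 * Z = 1 \<and> Z * foldr (*) ps 1 = 1"
  using assms
proof (induction ps)
  case Nil
  then show ?case using paravector_prod_single[OF paravector_scalar[of 1]] by auto
next
  case (Cons p ps)
  obtain Z where Z: "paravector_prod Z" "foldr (*) ps 1 * Z = 1" "Z * foldr (*) ps 1 = 1"
    using Cons by auto
  obtain q where q: "paravector q" "p * q = 1" "q * p = 1" using Cons.prems by auto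
  have "paravector_prod (Z * q)" using paravector_prod_mult[OF Z(1) paravector_prod_single[OF q(1)]] .
  moreover have "foldr (*) (p # ps) 1 * (Z * q) = p * (foldr (*) ps 1 * Z) * q"
    by (simp add: mult.assoc)
  moreover have "(Z * q) * foldr (*) (p # ps) 1 = Z * (q * p) * foldr (*) ps 1"
    by (simp add: mult.assoc)
  ultimately show ?case using Z q by auto
qed

lemma tau_alg_clifford_group: assumes "b \<in> clifford_group n"
  shows "paravector_prod (tau_alg b)"
    and "\<exists>Z. paravector_prod Z \<and> tau_alg b * Z = 1 \<and> Z * tau_alg b = 1"
proof -
  obtain vs where vs: "b = foldr (cl_mult n) vs cl_one" "\<forall>v\<in>set vs. v \<in> vecs n \<and> v \<noteq> (\<lambda>_. 0)"
    using assms unfolding clifford_group_def by blast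
  have tb: "tau_alg b = foldr (*) (map tau_alg vs) 1" using vs(1) tau_alg_foldr by simp
  have pv: "\<forall>p\<in>set (map tau_alg vs). paravector p"
    using vs(2) paravector_tau_alg_vec by auto
  moreover have "\<forall>p\<in>set (map tau_alg vs). p \<noteq> 0"
    using vs(2) tau_alg_injective vecs_CL by auto
  ultimately have "\<forall>p\<in>set (map tau_alg vs). \<exists>q. paravector q \<and> p * q = 1 \<and> q * p = 1"
    using paravector_inverse by blast
  then show "\<exists>Z. paravector_prod Z \<and> tau_alg b * Z = 1 \<and> Z * tau_alg b = 1"
    unfolding tb by (rule paravector_prod_inverse)
  show "paravector_prod (tau_alg b)" unfolding paravector_prod_def tb using pv by blast
qed

lemma tau_alg_clifford_group_zero: "b \<in> clifford_group n \<union> {\<lambda>_. 0} \<Longrightarrow> paravector_prod (tau_alg b)"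
  using tau_alg_clifford_group(1) paravector_prod_single[OF paravector_scalar[of 0]]
  by (auto simp: tau_alg_zero)

subsection \<open>The denominator d^* - b^* x is invertible\<close>

text \<open>Vahlen factorisation: if b lies in the Clifford group then rev(d) = rev(b) p for a
 paravector p.  With B = tau(b)^-1 and Y = tau(d) B, the relations defining SL_2(Gamma_n) give
 tau(c rev d) = Y P mrev(Y) - mrev(Y) for the paravector P = tau(a rev b); as tau(c rev d) is
 a paravector, so is p = mrev(Y).\<close>

lemma rev_denominator_factor:
  assumes g: "(a, b, c, d) \<in> SL2_Gamma n" and b: "b \<in> clifford_group n"
  shows "\<exists>p. paravector p \<and> mrev (tau_alg d) = mrev (tau_alg b) * p"
proof -
  have h1: "cl_sub (cl_mult n a (cl_rev d)) (cl_mult n b (cl_rev c)) = cl_one"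
    and h2: "cl_mult n a (cl_rev b) \<in> vecs n" and h3: "cl_mult n c (cl_rev d) \<in> vecs n"
    and d: "d \<in> clifford_group n \<union> {\<lambda>_. 0}"
    using g unfolding SL2_Gamma_def by auto
  define Ta Tb Tc Td where "Ta = tau_alg a" "Tb = tau_alg b" "Tc = tau_alg c" "Td = tau_alg d"
  have det: "Ta * mrev Td - Tb * mrev Tc = 1"
    using arg_cong[OF h1, of tau_alg] by (simp add: tau_alg_sub tau_alg_mult tau_alg_rev tau_alg_one Ta_Tb_Tc_Td_def)
  define P where "P = Ta * mrev Tb"
  have P: "paravector P"
    using paravector_tau_alg_vec[OF h2] by (simp add: tau_alg_mult tau_alg_rev P_def Ta_Tb_Tc_Td_def)
  have Q: "paravector (Tc * mrev Td)"
    using paravector_tau_alg_vec[OF h3] by (simp add: tau_alg_mult tau_alg_rev Ta_Tb_Tc_Td_def)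
  obtain B where B: "paravector_prod B" "Tb * B = 1" "B * Tb = 1"
    using tau_alg_clifford_group(2)[OF b] by (auto simp: Ta_Tb_Tc_Td_def)
  define Y where "Y = Td * B"
  have Y: "paravector_prod Y"
    unfolding Y_def using paravector_prod_mult[OF tau_alg_clifford_group_zero[OF d] B(1)]
    by (simp add: Ta_Tb_Tc_Td_def)
  have a_eq: "P * mrev B = Ta"
    using B(3) by (simp add: P_def mult.assoc mrev_mult[symmetric] mrev_one)
  have rev_c_eq: "mrev Tc = B * Ta * mrev Td - B"
  proof -
    have "B * (Tb * mrev Tc) = B * (Ta * mrev Td - 1)" using det by (simp add: algebra_simps)
    then show ?thesis using B(3) by (simp add: mult.assoc[symmetric] right_diff_distrib)
  qed
  have rev_a_eq: "mrev Ta = B * P"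
    using arg_cong[OF a_eq, of mrev] mrev_paravector[OF P] by (simp add: mrev_mult mrev_mrev)
  have c_eq: "Tc = Td * mrev Ta * mrev B - mrev B"
    using arg_cong[OF rev_c_eq, of mrev] by (simp add: mrev_diff mrev_mult mrev_mrev mult.assoc)
  have "Tc * mrev Td = Y * P * mrev Y - mrev Y"
    unfolding c_eq rev_a_eq Y_def by (simp add: mrev_mult left_diff_distrib mult.assoc)
  then have "mrev Y = Y * P * mrev Y - Tc * mrev Td" by simp
  then have "paravector (mrev Y)"
    using paravector_diff[OF paravector_twisted_conj[OF Y P] Q] by simp
  moreover have "mrev Tb * mrev Y = mrev Td"
    using B(3) by (simp add: Y_def mrev_mult[symmetric] mult.assoc)
  ultimately show ?thesis unfolding Ta_Tb_Tc_Td_def by metis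
qed

text \<open>tau(w) is invertible for w = d^* - b^* x \<noteq> 0.  If b = 0 then tau(w) = mrev(tau d), and
 tau(a) mrev(tau d) = 1 forces d \<noteq> 0.  Otherwise tau(w) = mrev(tau b) (p - tau x) with both factors
 invertible, the paravector p - tau x being nonzero by injectivity of tau.\<close>

lemma denominator_has_inverse:
  assumes g: "(a, b, c, d) \<in> SL2_Gamma n" and x: "x \<in> vecs n"
    and w: "w = cl_sub (cl_rev d) (cl_mult n (cl_rev b) x)" "w \<noteq> (\<lambda>_. 0)"
  shows "has_inverse (tau_alg w)"
proof -
  have mem: "b \<in> clifford_group n \<union> {\<lambda>_. 0}" "d \<in> clifford_group n \<union> {\<lambda>_. 0}"
    and det: "cl_sub (cl_mult n a (cl_rev d)) (cl_mult n b (cl_rev c)) = cl_one"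
    using g unfolding SL2_Gamma_def by auto
  have tw: "tau_alg w = mrev (tau_alg d) - mrev (tau_alg b) * tau_alg x"
    unfolding w(1) by (simp add: tau_alg_sub tau_alg_mult tau_alg_rev)
  show ?thesis
  proof (cases "b = (\<lambda>_. 0)")
    case True
    then have "tau_alg a * mrev (tau_alg d) = 1"
      using arg_cong[OF det, of tau_alg] by (simp add: tau_alg_sub tau_alg_mult tau_alg_rev tau_alg_one tau_alg_zero mrev_zero)
    then have "d \<noteq> (\<lambda>_. 0)" by (auto simp: tau_alg_zero mrev_zero)
    then have "has_inverse (tau_alg d)"
      using mem(2) tau_alg_clifford_group(2) unfolding has_inverse_def by blast
    then show ?thesis using True tw by (simp add: tau_alg_zero mrev_zero mrev_has_inverse)
  next
    case False
    then have b: "b \<in> clifford_group n" using mem(1) by auto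
    obtain p where p: "paravector p" "mrev (tau_alg d) = mrev (tau_alg b) * p"
      using rev_denominator_factor[OF g b] by blast
    have factor: "tau_alg w = mrev (tau_alg b) * (p - tau_alg x)"
      using tw p(2) by (simp add: right_diff_distrib)
    have "tau_alg w \<noteq> 0"
      using w tau_alg_injective clifford_group_CL[OF mem(2)] clifford_group_CL[OF mem(1)]
      by (metis cl_mult_CL cl_rev_CL cl_sub_CL)
    then have "p - tau_alg x \<noteq> 0" using factor by auto
    then have "has_inverse (p - tau_alg x)"
      using paravector_inverse paravector_diff[OF p(1) paravector_tau_alg_vec[OF x]]
      unfolding has_inverse_def by blast
    moreover have "has_inverse (mrev (tau_alg b))"
      using tau_alg_clifford_group(2)[OF b] mrev_has_inverse unfolding has_inverse_def by blast
    ultimately show ?thesis unfolding factor by (rule has_inverse_mult[rotated])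
  qed
qed

lemma normalized_denominator_has_inverse:
  assumes "(a, b, c, d) \<in> SL2_Gamma n" "x \<in> vecs n"
    and w: "w = cl_sub (cl_rev d) (cl_mult n (cl_rev b) x)" "w \<noteq> (\<lambda>_. 0)"
  shows "has_inverse (tau_alg (cl_scale (1 / cl_norm n w) w))"
proof -
  have "d \<in> clifford_group n \<union> {\<lambda>_. 0}" using assms(1) unfolding SL2_Gamma_def by auto
  then have "w \<in> CL n" unfolding w(1) by (intro cl_sub_CL cl_rev_CL cl_mult_CL clifford_group_CL)
  moreover obtain A where A: "w A \<noteq> 0" using w(2) by auto
  ultimately have "A \<in> Pow {2..n}" unfolding CL_def by auto
  with A have "(\<Sum>A\<in>Pow {2..n}. (w A)\<^sup>2) > 0" by (intro sum_pos2[of _ A]) auto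
  then have "cl_norm n w \<noteq> 0" unfolding cl_norm_def by simp
  then show ?thesis unfolding tau_alg_scale
    by (intro has_inverse_scaleR denominator_has_inverse[OF assms]) simp
qed

lemma to_matrix_blade:
  "to_matrix (blade A) = foldr (\<lambda>j M. (to_matrix eps ** to_matrix (e j)) ** M) (sorted_list_of_set A) (mat 1)"
proof -
  have "to_matrix (foldr (\<lambda>j M. X j * M) xs 1) = foldr (\<lambda>j M. (to_matrix eps ** to_matrix (e j)) ** M) xs (mat 1)"
    for xs by (induction xs) (simp_all add: X_def to_matrix_mult to_matrix_one)
  then show ?thesis unfolding blade_def .
qed

lemma tau_eq_to_matrix: "tau n (\<lambda>i. to_matrix (e i)) a = to_matrix (tau_alg a)"
  unfolding tau_def tau_alg_def
  by (simp add: to_matrix_sum to_matrix_scaleR to_matrix_blade mat_of_real_mult)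

lemma eps_intertwines_inverse: assumes "has_inverse (tau_alg u)"
  shows "to_matrix eps ** matrix_inv (tau' n (\<lambda>i. to_matrix (e i)) u)
    = matrix_inv (tau n (\<lambda>i. to_matrix (e i)) u) ** to_matrix eps"
proof -
  obtain Z where Z: "tau_alg u * Z = 1" "Z * tau_alg u = 1"
    using assms unfolding has_inverse_def by blast
  have "(eps * tau_alg u * (- eps)) * (eps * Z * (- eps)) = eps * (tau_alg u * (eps * (- eps)) * Z) * (- eps)"
    by (simp add: mult.assoc)
  also have "\<dots> = 1" using Z eps_square by simp
  finally have right: "(eps * tau_alg u * (- eps)) * (eps * Z * (- eps)) = 1" .
  have "(eps * Z * (- eps)) * (eps * tau_alg u * (- eps)) = eps * (Z * (eps * (- eps)) * tau_alg u) * (- eps)"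
    by (simp add: mult.assoc)
  also have "\<dots> = 1" using Z eps_square by simp
  finally have left: "(eps * Z * (- eps)) * (eps * tau_alg u * (- eps)) = 1" .
  have "eps * (eps * Z * (- eps)) = Z * eps" using eps_square by (simp flip: mult.assoc)
  then show ?thesis
    unfolding tau'_def tau_eq_to_matrix tau_alg_prin matrix_inv_to_matrix[OF right left]
      matrix_inv_to_matrix[OF Z] by (simp flip: to_matrix_mult)
qed

end

lemma pi_gen_intertwine:
  fixes P :: "complex^'m::finite^'m"
  assumes "\<And>w. w = cl_sub (cl_rev d) (cl_mult n (cl_rev b) x) \<Longrightarrow> w \<noteq> (\<lambda>_. 0) \<Longrightarrow>
    P ** matrix_inv (t' (cl_scale (1 / cl_norm n w) w)) = matrix_inv (t (cl_scale (1 / cl_norm n w) w)) ** P"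
  shows "P *v pi_gen n t' lam (a, b, c, d) f x = pi_gen n t lam (a, b, c, d) (\<lambda>y. P *v f y) x"
proof -
  have scale: "P *v (k *s v) = k *s (P *v v)" for k v
    by (simp add: vec_eq_iff matrix_vector_mult_def sum_distrib_left mult.left_commute)
  show ?thesis using assms[OF refl]
    by (simp add: pi_gen_def Let_def scale matrix_vector_mul_assoc)
qed

lemma clifford_gens_of_matrices:
  fixes E :: "nat \<Rightarrow> complex^'m::finite^'m"
  assumes "n \<ge> 2"
    and "\<And>i. i \<in> {1..n} \<Longrightarrow> cadj (E i) = - E i"
    and "\<And>i j. i \<in> {1..n} \<Longrightarrow> j \<in> {1..n} \<Longrightarrow>
           E i ** E j + E j ** E i = mat (if i = j then -2 else 0)"
  shows "clifford_gens n (\<lambda>i. of_matrix (E i))"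
proof
  show "2 \<le> n" using assms(1) .
  fix i j assume i: "i \<in> {1..n}" and j: "j \<in> {1..n}"
  have "to_matrix (of_matrix (E i) * of_matrix (E j) + of_matrix (E j) * of_matrix (E i))
      = to_matrix (of_real (if i = j then -2 else 0))"
    using assms(3)[OF i j] by (simp add: to_matrix_add to_matrix_mult to_matrix_of_real of_matrix_inverse)
  then show "of_matrix (E i) * of_matrix (E j) + of_matrix (E j) * of_matrix (E i) = (if i = j then -2 else 0)"
    by (simp add: to_matrix_inject split: if_splits)
next
  fix i assume i: "i \<in> {1..n}"
  have "to_matrix (adjoint (of_matrix (E i))) = to_matrix (- of_matrix (E i))"
    using assms(2)[OF i] by (simp add: adjoint.rep_eq to_matrix_minus of_matrix_inverse)
  then show "adjoint (of_matrix (E i)) = - of_matrix (E i)" by (simp add: to_matrix_inject)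
qed

theorem mainTheorem7:
  fixes n :: nat and E :: "nat \<Rightarrow> complex^'m::finite^'m" and lam :: complex
    and g :: "mv \<times> mv \<times> mv \<times> mv" and f :: "mv \<Rightarrow> complex^'m" and x :: mv
  assumes "n \<ge> 2"
    and "\<And>i. i \<in> {1..n} \<Longrightarrow> cadj (E i) = - E i"
    and "\<And>i j. i \<in> {1..n} \<Longrightarrow> j \<in> {1..n} \<Longrightarrow>
           E i ** E j + E j ** E i = mat (if i = j then -2 else 0)"
    and "g \<in> SL2_Gamma n"
    and "x \<in> vecs n"
  shows "E 1 *v pi'_rep n E lam g f x = pi_rep n E lam g (\<lambda>y. E 1 *v f y) x"
proof -
  interpret C: clifford_gens n "\<lambda>i. of_matrix (E i)"
    using clifford_gens_of_matrices[OF assms(1-3)] .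
  have E: "(\<lambda>i. to_matrix (of_matrix (E i))) = E" by (simp add: of_matrix_inverse)
  obtain a b c d where g: "g = (a, b, c, d)" by (cases g)
  show ?thesis unfolding pi_rep_def pi'_rep_def g
  proof (rule pi_gen_intertwine)
    fix w assume "w = cl_sub (cl_rev d) (cl_mult n (cl_rev b) x)" "w \<noteq> (\<lambda>_. 0)"
    then have "has_inverse (C.tau_alg (cl_scale (1 / cl_norm n w) w))"
      using C.normalized_denominator_has_inverse assms(4,5) g by blast
    from C.eps_intertwines_inverse[OF this]
    show "E 1 ** matrix_inv (tau' n E (cl_scale (1 / cl_norm n w) w))
        = matrix_inv (tau n E (cl_scale (1 / cl_norm n w) w)) ** E 1"
      by (simp add: of_matrix_inverse)
  qed
qed

end
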